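(* There exists $\theta_0\in(0,\pi/4)$, depending only on $\alpha$, such that for every $\theta\in(0,\theta_0)$ there exists $a_0(\theta)\ge1$ such that for every $a>a_0(\theta)$ and every $b\in(0,1)$ we have $\mathcal R(t,b,\theta)\subset B(p,r_p)$ for all $p\in\mathcal P(a,b,\theta)$ and all $t\in[1,x_p]$.
   Context: $\mathbb H=\mathbb R^3$, $p=(x_p,y_p,z_p)$, group law $(x,y,z)\cdot(x',y',z')=(x+x',y+y',z+z'+\tfrac12(xy'-yx'))$, dilations $\delta_\lambda(x,y,z)=(\lambda x,\lambda y,\lambda^2z)$. Fix $\alpha>0$ such that $d_\alpha(p,q)=\inf\{r>0:\delta_{1/r}(p^{-1}\cdot q)\in B_\alpha\}$ is a distance, $B_\alpha$ the closed Euclidean ball of radius $\alpha$ at $0$. $B(p,r)=\{q:d_\alpha(q,p)\le r\}$, $r_p=d_\alpha(0,p)$. $\mathcal P(a,b,\theta)=\{p: x_p>a,\ |z_p|<b,\ |y_p|<x_p\tan\theta\}$ and $\mathcal R(t,b,\theta)=\{p: x_p=t,\ |z_p|<b,\ |y_p|<x_p\tan\theta\}$. *)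

theory Defs
  imports "HOL-Analysis.Analysis"
begin

type_synonym heis = "real \<times> real \<times> real"

definition xc :: "heis \<Rightarrow> real" where "xc p = fst p"
definition yc :: "heis \<Rightarrow> real" where "yc p = fst (snd p)"
definition zc :: "heis \<Rightarrow> real" where "zc p = snd (snd p)"

definition hmul :: "heis \<Rightarrow> heis \<Rightarrow> heis" where
  "hmul p q = (xc p + xc q, yc p + yc q,
               zc p + zc q + (1/2) * (xc p * yc q - yc p * xc q))"

definition hinv :: "heis \<Rightarrow> heis" where
  "hinv p = (- xc p, - yc p, - zc p)"

definition dil :: "real \<Rightarrow> heis \<Rightarrow> heis" where
  "dil l p = (l * xc p, l * yc p, l^2 * zc p)"

definition Balpha :: "real \<Rightarrow> heis set" where
  "Balpha \<alpha> = {p. (xc p)^2 + (yc p)^2 + (zc p)^2 \<le> \<alpha>^2}"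

definition d_alpha :: "real \<Rightarrow> heis \<Rightarrow> heis \<Rightarrow> real" where
  "d_alpha \<alpha> p q = Inf {r. r > 0 \<and> dil (1/r) (hmul (hinv p) q) \<in> Balpha \<alpha>}"

definition is_distance :: "(heis \<Rightarrow> heis \<Rightarrow> real) \<Rightarrow> bool" where
  "is_distance d \<longleftrightarrow>
     (\<forall>p q. 0 \<le> d p q) \<and> (\<forall>p q. d p q = 0 \<longleftrightarrow> p = q) \<and>
     (\<forall>p q. d p q = d q p) \<and> (\<forall>p q s. d p s \<le> d p q + d q s)"

definition hball :: "real \<Rightarrow> heis \<Rightarrow> real \<Rightarrow> heis set" where
  "hball \<alpha> p r = {q. d_alpha \<alpha> q p \<le> r}"

definition rp :: "real \<Rightarrow> heis \<Rightarrow> real" where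
  "rp \<alpha> p = d_alpha \<alpha> (0,0,0) p"

definition Pset :: "real \<Rightarrow> real \<Rightarrow> real \<Rightarrow> heis set" where
  "Pset a b \<theta> = {p. xc p > a \<and> \<bar>zc p\<bar> < b \<and> \<bar>yc p\<bar> < xc p * tan \<theta>}"

definition Rset :: "real \<Rightarrow> real \<Rightarrow> real \<Rightarrow> heis set" where
  "Rset t b \<theta> = {p. xc p = t \<and> \<bar>zc p\<bar> < b \<and> \<bar>yc p\<bar> < xc p * tan \<theta>}"

end

theory Submission
  imports Defs
begin

text \<open>
  Write \<open>\<parallel>g\<parallel> = d\<^sub>\<alpha>(0, g)\<close> for the gauge, so that \<open>d\<^sub>\<alpha>(q, p) = \<parallel>q\<^sup>-\<^sup>1p\<parallel>\<close>.
  A radius \<open>r\<close> is admissible for \<open>g\<close> iff \<open>(x\<^sup>2 + y\<^sup>2) u + z\<^sup>2 u\<^sup>2 \<le> \<alpha>\<^sup>2\<close> with \<open>u = r\<^sup>-\<^sup>2\<close>,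
  so \<open>\<parallel>g'\<parallel> \<le> \<parallel>g\<parallel>\<close> as soon as the horizontal square norm of \<open>g\<close> exceeds that of
  \<open>g'\<close> by at least \<open>\<alpha>\<bar>z'\<bar>\<close>. For \<open>q \<in> \<R>(t, b, \<theta>)\<close> and \<open>p \<in> \<P>(a, b, \<theta>)\<close>, moving
  horizontally from \<open>p\<close> towards \<open>q\<close> gains about \<open>2 t x\<^sub>p\<close> in square norm, while the
  vertical coordinate of \<open>q\<^sup>-\<^sup>1p\<close> is at most \<open>2 + t x\<^sub>p tan \<theta>\<close>; for small \<theta> and
  large \<open>a\<close> the gain wins.
\<close>

definition hgauge :: "real \<Rightarrow> heis \<Rightarrow> real" where
  "hgauge \<alpha> g = Inf {r. r > 0 \<and> dil (1/r) g \<in> Balpha \<alpha>}"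

lemma d_alpha_eq_hgauge: "d_alpha \<alpha> p q = hgauge \<alpha> (hmul (hinv p) q)"
  by (simp add: d_alpha_def hgauge_def)

lemma hmul_hinv_zero [simp]: "hmul (hinv (0,0,0)) p = p"
  by (cases p) (simp add: hmul_def hinv_def xc_def yc_def zc_def)

lemma dil_inverse_mem_Balpha_iff:
  "dil (1/r) g \<in> Balpha \<alpha> \<longleftrightarrow>
     ((xc g)\<^sup>2 + (yc g)\<^sup>2) * (1/r)\<^sup>2 + (zc g)\<^sup>2 * ((1/r)\<^sup>2)\<^sup>2 \<le> \<alpha>\<^sup>2"
  by (simp add: dil_def Balpha_def xc_def yc_def zc_def power_mult_distrib
      algebra_simps power2_eq_square)

lemma admissible_radius_exists:
  assumes "\<alpha> > 0"
  shows "\<exists>r>0. dil (1/r) g \<in> Balpha \<alpha>"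
proof -
  define M where "M = (xc g)\<^sup>2 + (yc g)\<^sup>2 + (zc g)\<^sup>2"
  have M0: "M \<ge> 0" unfolding M_def by simp
  define r where "r = max 1 (sqrt M / \<alpha>)"
  define u where "u = (1/r)\<^sup>2"
  have r1: "r \<ge> 1" unfolding r_def by simp
  have u0: "0 \<le> u" and u1: "u \<le> 1" unfolding u_def using r1 by (auto simp: power_le_one)
  have "sqrt M = \<alpha> * (sqrt M / \<alpha>)" using assms by simp
  also have "\<dots> \<le> \<alpha> * r" unfolding r_def using assms by (intro mult_left_mono) auto
  finally have "(sqrt M)\<^sup>2 \<le> (\<alpha> * r)\<^sup>2" using M0 by (intro power_mono) simp_all
  hence "M \<le> (\<alpha> * r)\<^sup>2" using M0 by simp
  hence "M * u \<le> \<alpha>\<^sup>2" using r1 unfolding u_def by (simp add: field_simps power2_eq_square)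
  moreover have "(zc g)\<^sup>2 * u\<^sup>2 \<le> (zc g)\<^sup>2 * u"
    using u0 u1 by (intro mult_left_mono) (auto simp: power2_eq_square mult_left_le)
  ultimately have "((xc g)\<^sup>2 + (yc g)\<^sup>2) * u + (zc g)\<^sup>2 * u\<^sup>2 \<le> \<alpha>\<^sup>2"
    unfolding M_def by (simp add: algebra_simps)
  thus ?thesis using r1 unfolding u_def dil_inverse_mem_Balpha_iff
    by (intro exI[of _ r]) auto
qed

text \<open>Admissibility of \<open>r\<close> for \<open>g\<close> already forces \<open>\<bar>z'\<bar> u \<le> \<alpha>\<close> (with \<open>u = r\<^sup>-\<^sup>2\<close>),
  which turns the quartic term \<open>z'\<^sup>2 u\<^sup>2\<close> into the linear one \<open>\<alpha> \<bar>z'\<bar> u\<close>.\<close>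
lemma hgauge_mono:
  assumes "\<alpha> > 0"
    and dom: "(xc g')\<^sup>2 + (yc g')\<^sup>2 + \<alpha> * \<bar>zc g'\<bar> \<le> (xc g)\<^sup>2 + (yc g)\<^sup>2"
  shows "hgauge \<alpha> g' \<le> hgauge \<alpha> g"
proof -
  let ?adm = "\<lambda>g. {r. r > 0 \<and> dil (1/r) g \<in> Balpha \<alpha>}"
  have "?adm g \<noteq> {}" using admissible_radius_exists[OF assms(1)] by blast
  moreover have "bdd_below (?adm g')" by (rule bdd_belowI[of _ 0]) auto
  moreover have "?adm g \<subseteq> ?adm g'"
  proof
    fix r assume "r \<in> ?adm g"
    define u where "u = (1/r)\<^sup>2"
    have r0: "r > 0" and "((xc g)\<^sup>2 + (yc g)\<^sup>2) * u + (zc g)\<^sup>2 * u\<^sup>2 \<le> \<alpha>\<^sup>2"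
      using \<open>r \<in> ?adm g\<close> by (auto simp: dil_inverse_mem_Balpha_iff u_def)
    moreover have "0 \<le> (zc g)\<^sup>2 * u\<^sup>2" by simp
    ultimately have Au: "((xc g)\<^sup>2 + (yc g)\<^sup>2) * u \<le> \<alpha>\<^sup>2" by linarith
    have u0: "u \<ge> 0" unfolding u_def by simp
    have "\<alpha> * \<bar>zc g'\<bar> \<le> (xc g)\<^sup>2 + (yc g)\<^sup>2"
      using dom zero_le_power2[of "xc g'"] zero_le_power2[of "yc g'"] by linarith
    hence "\<alpha> * (\<bar>zc g'\<bar> * u) \<le> ((xc g)\<^sup>2 + (yc g)\<^sup>2) * u"
      by (metis mult.assoc mult_right_mono u0)
    also have "\<dots> \<le> \<alpha> * \<alpha>" using Au by (simp add: power2_eq_square)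
    finally have zu: "\<bar>zc g'\<bar> * u \<le> \<alpha>" using assms(1) by simp
    have "(zc g')\<^sup>2 * u\<^sup>2 = (\<bar>zc g'\<bar> * u) * (\<bar>zc g'\<bar> * u)" by (simp add: power2_eq_square)
    also have "\<dots> \<le> \<alpha> * (\<bar>zc g'\<bar> * u)" using zu u0 by (intro mult_right_mono) auto
    finally have "((xc g')\<^sup>2 + (yc g')\<^sup>2) * u + (zc g')\<^sup>2 * u\<^sup>2
        \<le> ((xc g')\<^sup>2 + (yc g')\<^sup>2 + \<alpha> * \<bar>zc g'\<bar>) * u"
      by (simp add: algebra_simps)
    also have "\<dots> \<le> ((xc g)\<^sup>2 + (yc g)\<^sup>2) * u" using dom u0 by (rule mult_right_mono)
    finally show "r \<in> ?adm g'" using Au r0 unfolding u_def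
      by (simp add: dil_inverse_mem_Balpha_iff)
  qed
  ultimately show ?thesis unfolding hgauge_def by (rule cInf_superset_mono)
qed

lemma horizontal_gain_dominates_vertical:
  fixes x y z t s w T \<alpha> :: real
  assumes "\<alpha> > 0" "T > 0" "T * (4 + 4 * \<alpha>) \<le> 1" "1 \<le> t" "t \<le> x" "4 * \<alpha> < x"
    and "\<bar>z\<bar> \<le> 1" "\<bar>w\<bar> \<le> 1" "\<bar>y\<bar> \<le> x * T" "\<bar>s\<bar> \<le> t * T"
  shows "(x - t)\<^sup>2 + (y - s)\<^sup>2 + \<alpha> * \<bar>z - w - (1/2) * (t * y - s * x)\<bar> \<le> x\<^sup>2 + y\<^sup>2"
proof -
  define P where "P = t * x"
  have "x \<le> P" unfolding P_def using assms(4,5) by (simp add: mult_right_mono[of 1 t x])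
  hence P4: "4 * \<alpha> < P" using assms(6) by linarith
  have "\<bar>t * y - s * x\<bar> \<le> t * \<bar>y\<bar> + \<bar>s\<bar> * x"
    using assms(4,5) abs_triangle_ineq4[of "t * y" "s * x"] by (simp add: abs_mult)
  also have "\<dots> \<le> t * (x * T) + (t * T) * x"
    using assms by (intro add_mono mult_left_mono mult_right_mono) auto
  finally have twist: "\<bar>t * y - s * x\<bar> \<le> 2 * (P * T)" unfolding P_def by (simp add: algebra_simps)
  have "\<bar>z - w - (1/2) * D\<bar> \<le> 2 + P * T" if "\<bar>D\<bar> \<le> 2 * (P * T)" for D :: real
    using that assms(7,8) by arith
  from this[OF twist] have vertical: "\<bar>z - w - (1/2) * (t * y - s * x)\<bar> \<le> 2 + P * T" .
  have "\<bar>s * y\<bar> \<le> (t * T) * (x * T)"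
    unfolding abs_mult using assms by (intro mult_mono) auto
  hence sy: "- (s * y) \<le> P * T\<^sup>2" unfolding P_def by (simp add: power2_eq_square algebra_simps)
  have t2: "t\<^sup>2 \<le> P" unfolding P_def power2_eq_square using assms by (simp add: mult_left_mono)
  have "s\<^sup>2 \<le> (t * T)\<^sup>2" using assms(10) by (metis abs_ge_zero power2_abs power_mono)
  also have "\<dots> = t\<^sup>2 * T\<^sup>2" by (rule power_mult_distrib)
  also have "\<dots> \<le> P * T\<^sup>2" using t2 by (rule mult_right_mono) simp
  finally have s2: "s\<^sup>2 \<le> P * T\<^sup>2" .
  have "0 < \<alpha> * T" and "4 * T + 4 * (\<alpha> * T) \<le> 1" using assms(1-3) by (simp_all add: algebra_simps)
  hence T4: "T \<le> 1/4" and aT: "\<alpha> * T \<le> 1/4" using assms(2) by linarith+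
  have "T\<^sup>2 \<le> (1/4)\<^sup>2" using T4 assms(2) by (intro power_mono) auto
  hence "9/16 \<le> 1 - 3 * T\<^sup>2 - \<alpha> * T" using aT by (simp add: power2_eq_square)
  hence "P * (9/16) \<le> P * (1 - 3 * T\<^sup>2 - \<alpha> * T)"
    using P4 assms(1) by (intro mult_left_mono) auto
  hence gain: "2 * \<alpha> \<le> P * (1 - 3 * T\<^sup>2 - \<alpha> * T)" using P4 assms(1) by linarith
  have "(x - t)\<^sup>2 + (y - s)\<^sup>2 = x\<^sup>2 + y\<^sup>2 - 2 * P - 2 * (s * y) + t\<^sup>2 + s\<^sup>2"
    unfolding P_def by (simp add: power2_eq_square algebra_simps)
  moreover have "\<alpha> * \<bar>z - w - (1/2) * (t * y - s * x)\<bar> \<le> \<alpha> * (2 + P * T)"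
    using vertical assms(1) by simp
  ultimately show ?thesis using gain sy s2 t2 by (simp add: algebra_simps power2_eq_square)
qed

lemma hmul_hinv_eq:
  "hmul (hinv (t, s, w)) (x, y, z) = (x - t, y - s, z - w - (1/2) * (t * y - s * x))"
  by (simp add: hmul_def hinv_def xc_def yc_def zc_def algebra_simps)

lemma Rset_subset_hball_rp:
  assumes "\<alpha> > 0" "0 < tan \<theta>" "tan \<theta> * (4 + 4 * \<alpha>) \<le> 1" "4 * \<alpha> \<le> a" "b \<le> 1"
    and p: "p \<in> Pset a b \<theta>" and t: "1 \<le> t" "t \<le> xc p"
  shows "Rset t b \<theta> \<subseteq> hball \<alpha> p (rp \<alpha> p)"
proof
  fix q assume q: "q \<in> Rset t b \<theta>"
  obtain x y z where p_eq: "p = (x, y, z)" by (cases p)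
  obtain s w where q_eq: "q = (t, s, w)" using q by (cases q) (auto simp: Rset_def xc_def)
  have "(x - t)\<^sup>2 + (y - s)\<^sup>2 + \<alpha> * \<bar>z - w - (1/2) * (t * y - s * x)\<bar> \<le> x\<^sup>2 + y\<^sup>2"
    using assms q unfolding p_eq q_eq
    by (intro horizontal_gain_dominates_vertical)
       (auto simp: Pset_def Rset_def xc_def yc_def zc_def)
  hence "hgauge \<alpha> (hmul (hinv q) p) \<le> hgauge \<alpha> p"
    using assms(1) unfolding p_eq q_eq hmul_hinv_eq
    by (intro hgauge_mono) (simp_all add: xc_def yc_def zc_def)
  thus "q \<in> hball \<alpha> p (rp \<alpha> p)"
    by (simp add: hball_def rp_def d_alpha_eq_hgauge)
qed

lemma tan_bounds_of_less_arctan: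
  assumes "0 < \<theta>" "\<theta> < arctan c"
  shows "0 < tan \<theta>" "tan \<theta> < c"
proof -
  have "\<theta> < pi/2" using assms(2) arctan_ubound less_trans by blast
  with assms(1) show "0 < tan \<theta>" by (rule tan_gt_zero)
  have "arctan (tan \<theta>) < arctan c" using assms \<open>\<theta> < pi/2\<close> by (simp add: arctan_tan)
  thus "tan \<theta> < c" by (simp add: arctan_less_iff)
qed

theorem lemma4p3:
  fixes \<alpha> :: real
  assumes "\<alpha> > 0" and "is_distance (d_alpha \<alpha>)"
  shows "\<exists>\<theta>\<^sub>0. 0 < \<theta>\<^sub>0 \<and> \<theta>\<^sub>0 < pi/4 \<and>
           (\<forall>\<theta>. 0 < \<theta> \<and> \<theta> < \<theta>\<^sub>0 \<longrightarrow>
             (\<exists>a\<^sub>0 \<ge> 1. \<forall>a b. a > a\<^sub>0 \<and> 0 < b \<and> b < 1 \<longrightarrow>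
                (\<forall>p \<in> Pset a b \<theta>. \<forall>t. 1 \<le> t \<and> t \<le> xc p \<longrightarrow>
                   Rset t b \<theta> \<subseteq> hball \<alpha> p (rp \<alpha> p))))"
proof (rule exI[of _ "arctan (1 / (4 + 4 * \<alpha>))"], intro conjI allI impI)
  have c_pos: "0 < 1 / (4 + 4 * \<alpha>)" and c_lt_1: "1 / (4 + 4 * \<alpha>) < 1"
    using assms(1) by (auto simp: field_simps)
  show "0 < arctan (1 / (4 + 4 * \<alpha>))" using c_pos by (simp add: arctan_less_zero_iff)
  show "arctan (1 / (4 + 4 * \<alpha>)) < pi/4" using c_lt_1 by (metis arctan_less_iff arctan_one)
  fix \<theta> assume "0 < \<theta> \<and> \<theta> < arctan (1 / (4 + 4 * \<alpha>))"
  hence "0 < tan \<theta>" and "tan \<theta> < 1 / (4 + 4 * \<alpha>)"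
    using tan_bounds_of_less_arctan by auto
  moreover from this(2) have "tan \<theta> * (4 + 4 * \<alpha>) \<le> 1"
    using assms(1) by (simp add: field_simps)
  ultimately show "\<exists>a\<^sub>0 \<ge> 1. \<forall>a b. a > a\<^sub>0 \<and> 0 < b \<and> b < 1 \<longrightarrow>
          (\<forall>p \<in> Pset a b \<theta>. \<forall>t. 1 \<le> t \<and> t \<le> xc p \<longrightarrow>
             Rset t b \<theta> \<subseteq> hball \<alpha> p (rp \<alpha> p))"
    using assms(1)
    by (intro exI[of _ "max 1 (4 * \<alpha>)"] conjI allI impI ballI Rset_subset_hball_rp) auto
qed

end
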